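(* Let $I=(c,d)$ and $J$ be open intervals of $\mathbb{R}$ with $c\in\mathbb{R}$, let $O=I\times J$, and let $L:O\to\mathbb{R}$, $(x,y)\mapsto L(x,y)$, be of class $C^1$. Let $a<b$ and $\alpha,\beta\in\mathbb{R}$. Let $X$ be the set of all $\gamma\in C([a,b])$ which are continuously differentiable on $(a,b]$, satisfy $(\gamma(t),\gamma'(t))\in O$ for all $t\in(a,b]$, $\gamma(a)=\alpha$, $\gamma(b)=\beta$, and for which the (possibly improper at $a$) integral $$\mathcal{L}(\gamma)=\int_a^b L(\gamma(t),\gamma'(t))\,dt$$ is defined. If $\gamma\in X$ is an extremum (a minimum or a maximum) of $\mathcal{L}$ on $X$, then $\gamma$ satisfies the Euler–Lagrange equation on $(a,b]$, i.e. for all $t\in(a,b]$, $$\frac{\partial L}{\partial x}(\gamma(t),\gamma'(t))=\frac{d}{dt}\,\frac{\partial L}{\partial y}(\gamma(t),\gamma'(t)).$$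
   Context: Here $C([a,b])$ denotes the space of real-valued continuous functions on $[a,b]$. The Euler–Lagrange equation includes the assertion that $t\mapsto \frac{\partial L}{\partial y}(\gamma(t),\gamma'(t))$ is differentiable on $(a,b]$ (one-sided at $b$). *)

theory Defs
  imports "HOL-Analysis.Analysis"
begin

definition curve_deriv :: "(real \<Rightarrow> real) \<Rightarrow> real \<Rightarrow> real \<Rightarrow> real \<Rightarrow> real" where
  "curve_deriv \<gamma> a b t = vector_derivative \<gamma> (at t within {a..b})"

definition action :: "(real \<times> real \<Rightarrow> real) \<Rightarrow> real \<Rightarrow> real \<Rightarrow> (real \<Rightarrow> real) \<Rightarrow> real" where
  "action L a b \<gamma> =
     Lim (at_right a) (\<lambda>s. integral {s..b} (\<lambda>t. L (\<gamma> t, curve_deriv \<gamma> a b t)))"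

definition action_defined :: "(real \<times> real \<Rightarrow> real) \<Rightarrow> real \<Rightarrow> real \<Rightarrow> (real \<Rightarrow> real) \<Rightarrow> bool" where
  "action_defined L a b \<gamma> \<longleftrightarrow>
     (\<forall>s\<in>{a<..b}. (\<lambda>t. L (\<gamma> t, curve_deriv \<gamma> a b t)) integrable_on {s..b}) \<and>
     (\<exists>l. ((\<lambda>s. integral {s..b} (\<lambda>t. L (\<gamma> t, curve_deriv \<gamma> a b t))) \<longlongrightarrow> l) (at_right a))"

definition admissible ::
  "(real \<times> real) set \<Rightarrow> (real \<times> real \<Rightarrow> real) \<Rightarrow> real \<Rightarrow> real \<Rightarrow> real \<Rightarrow> real \<Rightarrow> (real \<Rightarrow> real) set" where
  "admissible Om L a b \<alpha> \<beta> = {\<gamma>.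
      continuous_on {a..b} \<gamma> \<and>
      (\<forall>t\<in>{a<..b}. \<gamma> differentiable (at t within {a..b})) \<and>
      continuous_on {a<..b} (curve_deriv \<gamma> a b) \<and>
      (\<forall>t\<in>{a<..b}. (\<gamma> t, curve_deriv \<gamma> a b t) \<in> Om) \<and>
      \<gamma> a = \<alpha> \<and> \<gamma> b = \<beta> \<and>
      action_defined L a b \<gamma>}"

end

theory Submission
  imports Defs
begin

text \<open>
  Vary \<open>\<gamma>\<close> to \<open>\<gamma> + \<epsilon> h\<close>, where \<open>h\<close> is \<open>C\<^sup>1\<close> on \<open>[a, b]\<close>, vanishes together with
  \<open>h'\<close> on \<open>[a, p]\<close> for some \<open>p > a\<close>, and vanishes at \<open>b\<close>. Near \<open>a\<close> nothing changes, so for small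
  \<open>\<epsilon>\<close> the varied curve is again admissible (compactness of the trace of \<open>(\<gamma>, \<gamma>')\<close> over
  \<open>[p, b]\<close>) and its action differs from that of \<open>\<gamma>\<close> by a proper integral over \<open>[p, b]\<close>.
  Extremality and differentiation under the integral sign give
  \<open>\<integral>\<^sub>p\<^sup>b L\<^sub>x h + L\<^sub>y h' = 0\<close>. Integrating the first term by parts against
  \<open>A(s) = \<integral>\<^sub>p\<^sup>s L\<^sub>x\<close> turns this into \<open>\<integral>\<^sub>p\<^sup>b (L\<^sub>y - A) h' = 0\<close> for every
  continuous \<open>h'\<close> with mean zero and \<open>h'(p) = 0\<close>; by the du Bois-Reymond lemma \<open>L\<^sub>y - A\<close> is
  constant on \<open>(p, b]\<close>. As \<open>p\<close> may be taken below any \<open>t \<in> (a, b]\<close>, this is the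
  Euler-Lagrange equation.
\<close>

lemma open_ereal_bounded_real_interval: "open {x::real. ereal c < ereal x \<and> ereal x < d}"
proof -
  have "{x::real. ereal c < ereal x \<and> ereal x < d} = {c<..} \<inter> {x. ereal x < d}" by auto
  moreover have "open {x::real. ereal x < d}"
    by (cases d) (auto simp: lessThan_def[symmetric])
  ultimately show ?thesis by (simp add: open_Int)
qed

lemma compact_image_perturbation_in_open:
  fixes f g :: "'a \<Rightarrow> 'b::real_normed_vector"
  assumes "compact (f ` T)" "f ` T \<subseteq> S" "open S" "bounded (g ` T)"
  obtains e where "e > 0" "\<And>\<epsilon> t. \<bar>\<epsilon>\<bar> < e \<Longrightarrow> t \<in> T \<Longrightarrow> f t + \<epsilon> *\<^sub>R g t \<in> S"
proof -
  obtain \<delta> where \<delta>: "\<delta> > 0" "\<And>x. x \<in> f ` T \<Longrightarrow> ball x \<delta> \<subseteq> S"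
    using Heine_Borel_lemma[OF assms(1), of "{S}"] assms(2,3) by auto
  obtain B where B: "B > 0" "\<And>t. t \<in> T \<Longrightarrow> norm (g t) \<le> B"
    using assms(4) by (auto simp: bounded_pos)
  show thesis
  proof
    show "\<delta> / B > 0" using \<delta> B by simp
    fix \<epsilon> t assume \<epsilon>: "\<bar>\<epsilon>\<bar> < \<delta> / B" and t: "t \<in> T"
    have "norm (\<epsilon> *\<^sub>R g t) \<le> \<bar>\<epsilon>\<bar> * B"
      using B(2)[OF t] by (simp add: mult_left_mono)
    also have "\<dots> < \<delta>" using \<epsilon> B(1) by (simp add: pos_less_divide_eq)
    finally show "f t + \<epsilon> *\<^sub>R g t \<in> S"
      using \<delta>(2)[of "f t"] t by (auto simp: dist_norm)
  qed
qed

lemma du_Bois_Reymond: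
  fixes G :: "real \<Rightarrow> real"
  assumes pb: "p < b" and G: "continuous_on {p..b} G"
    and orthogonal: "\<And>\<phi>. continuous_on {p..b} \<phi> \<Longrightarrow> \<phi> p = 0 \<Longrightarrow> integral {p..b} \<phi> = 0 \<Longrightarrow>
                       integral {p..b} (\<lambda>s. G s * \<phi> s) = 0"
  obtains c where "\<And>s. s \<in> {p<..b} \<Longrightarrow> G s = c"
proof -
  define W where "W = (b - p)\<^sup>2 / 2"
  have W_int: "((\<lambda>s. s - p) has_integral W) {p..b}"
  proof -
    have "((\<lambda>s. s - p) has_integral (b - p)\<^sup>2 / 2 - (p - p)\<^sup>2 / 2) {p..b}"
      using pb by (intro fundamental_theorem_of_calculus)
        (auto intro!: derivative_eq_intros simp: has_real_derivative_iff_has_vector_derivative[symmetric])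
    then show ?thesis by (simp add: W_def)
  qed
  have W: "W \<noteq> 0" using pb by (simp add: W_def)
  \<comment> \<open>Testing against \<open>(s - p) (G s - c)\<close>, with \<open>c\<close> the \<open>(s - p)\<close>-weighted mean of \<open>G\<close>,
    gives \<open>\<integral> (s - p) (G s - c)\<^sup>2 = 0\<close>.\<close>
  define c where "c = integral {p..b} (\<lambda>s. (s - p) * G s) / W"
  define \<phi> where "\<phi> s = (s - p) * (G s - c)" for s
  have \<phi>_cont: "continuous_on {p..b} \<phi>" unfolding \<phi>_def by (intro continuous_intros G)
  have wG_int: "(\<lambda>s. (s - p) * G s) integrable_on {p..b}"
    by (intro integrable_continuous_interval continuous_intros G)
  have "(\<phi> has_integral integral {p..b} (\<lambda>s. (s - p) * G s) - W * c) {p..b}"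
    unfolding \<phi>_def right_diff_distrib
    by (intro has_integral_diff has_integral_mult_left W_int integrable_integral wG_int)
  then have \<phi>_int: "integral {p..b} \<phi> = 0" using W by (simp add: c_def integral_unique)
  then have G\<phi>: "integral {p..b} (\<lambda>s. G s * \<phi> s) = 0"
    using orthogonal[OF \<phi>_cont] by (simp add: \<phi>_def)
  have sq_cont: "continuous_on {p..b} (\<lambda>s. (s - p) * (G s - c)\<^sup>2)"
    by (intro continuous_intros G)
  have "integral {p..b} (\<lambda>s. (s - p) * (G s - c)\<^sup>2) = integral {p..b} (\<lambda>s. G s * \<phi> s - c * \<phi> s)"
    by (intro integral_cong) (simp add: \<phi>_def power2_eq_square algebra_simps)
  also have "\<dots> = integral {p..b} (\<lambda>s. G s * \<phi> s) - c * integral {p..b} \<phi>"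
    using integrable_continuous_interval[OF continuous_on_mult[OF G \<phi>_cont]]
      integrable_on_mult_right[OF integrable_continuous_interval[OF \<phi>_cont]]
    by (simp add: integral_diff)
  also have "\<dots> = 0" using G\<phi> \<phi>_int by simp
  finally have "((\<lambda>s. (s - p) * (G s - c)\<^sup>2) has_integral 0) (cbox p b)"
    using integrable_continuous_interval[OF sq_cont] by (simp add: has_integral_iff cbox_interval)
  then have zero: "(s - p) * (G s - c)\<^sup>2 = 0" if "s \<in> {p..b}" for s
    using pb that sq_cont by (intro has_integral_0_cbox_imp_0) (simp_all add: cbox_interval)
  have "G s = c" if "s \<in> {p<..b}" for s
    using zero[of s] that by simp
  then show thesis by (rule that)
qed

definition extremal_on :: "('a \<Rightarrow> real) \<Rightarrow> 'a set \<Rightarrow> 'a \<Rightarrow> bool" where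
  "extremal_on F X x \<longleftrightarrow> (\<forall>y\<in>X. F x \<le> F y) \<or> (\<forall>y\<in>X. F y \<le> F x)"

locale lagrangian_curve =
  fixes Om :: "(real \<times> real) set" and L Lx Ly :: "real \<times> real \<Rightarrow> real"
    and a b \<alpha> \<beta> :: real and \<gamma> :: "real \<Rightarrow> real"
  assumes open_Om: "open Om"
    and L_deriv: "\<And>p. p \<in> Om \<Longrightarrow> (L has_derivative (\<lambda>(h, k). Lx p * h + Ly p * k)) (at p)"
    and Lx_cont: "continuous_on Om Lx" and Ly_cont: "continuous_on Om Ly"
    and a_less_b: "a < b"
    and admissible: "\<gamma> \<in> admissible Om L a b \<alpha> \<beta>"
begin

abbreviation "\<gamma>' \<equiv> curve_deriv \<gamma> a b"

lemma L_cont: "continuous_on Om L"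
  by (intro continuous_at_imp_continuous_on ballI has_derivative_continuous[OF L_deriv])

lemma \<gamma>_cont: "continuous_on {a..b} \<gamma>"
  and \<gamma>'_cont: "continuous_on {a<..b} \<gamma>'"
  and \<gamma>_in_Om: "\<And>t. t \<in> {a<..b} \<Longrightarrow> (\<gamma> t, \<gamma>' t) \<in> Om"
  and \<gamma>_a: "\<gamma> a = \<alpha>" and \<gamma>_b: "\<gamma> b = \<beta>"
  and action_defined_\<gamma>: "action_defined L a b \<gamma>"
  using admissible by (simp_all add: admissible_def)

lemma \<gamma>_has_derivative:
  assumes "t \<in> {a<..b}"
  shows "(\<gamma> has_real_derivative \<gamma>' t) (at t within {a..b})"
proof -
  have "\<gamma> differentiable (at t within {a..b})" using admissible assms by (simp add: admissible_def)
  then show ?thesis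
    unfolding curve_deriv_def has_real_derivative_iff_has_vector_derivative vector_derivative_works .
qed

lemma continuous_on_\<gamma>_pair: "S \<subseteq> {a<..b} \<Longrightarrow> continuous_on S (\<lambda>t. (\<gamma> t, \<gamma>' t))"
  by (intro continuous_on_Pair continuous_on_subset[OF \<gamma>_cont] continuous_on_subset[OF \<gamma>'_cont]) auto

lemma continuous_on_along_\<gamma>:
  assumes "continuous_on Om f" "S \<subseteq> {a<..b}"
  shows "continuous_on S (\<lambda>t. f (\<gamma> t, \<gamma>' t))"
proof -
  have "(\<lambda>t. (\<gamma> t, \<gamma>' t)) ` S \<subseteq> Om" using \<gamma>_in_Om assms(2) by auto
  then show ?thesis by (rule continuous_on_compose2[OF assms(1) continuous_on_\<gamma>_pair[OF assms(2)]])
qed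

end

locale lagrangian_variation = lagrangian_curve +
  fixes h h' :: "real \<Rightarrow> real" and p :: real
  assumes a_less_p: "a < p" and p_less_b: "p < b"
    and h_deriv: "\<And>t. t \<in> {a..b} \<Longrightarrow> (h has_real_derivative h' t) (at t within {a..b})"
    and h'_cont: "continuous_on {a..b} h'"
    and h_vanishes: "\<And>t. t \<in> {a..p} \<Longrightarrow> h t = 0"
    and h'_vanishes: "\<And>t. t \<in> {a..p} \<Longrightarrow> h' t = 0"
    and h_b: "h b = 0"
begin

lemma h_cont: "continuous_on {a..b} h"
  using h_deriv by (meson DERIV_continuous continuous_on_eq_continuous_within)

definition tail_action :: "real \<Rightarrow> real" where
  "tail_action \<epsilon> = integral {p..b} (\<lambda>t. L (\<gamma> t + \<epsilon> * h t, \<gamma>' t + \<epsilon> * h' t))"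

lemma small_variations_in_Om:
  obtains e where "e > 0"
    "\<And>\<epsilon> t. \<bar>\<epsilon>\<bar> < e \<Longrightarrow> t \<in> {a<..b} \<Longrightarrow> (\<gamma> t + \<epsilon> * h t, \<gamma>' t + \<epsilon> * h' t) \<in> Om"
proof -
  have "compact ((\<lambda>t. (\<gamma> t, \<gamma>' t)) ` {p..b})"
    using a_less_p by (intro compact_continuous_image continuous_on_\<gamma>_pair) auto
  moreover have "(\<lambda>t. (\<gamma> t, \<gamma>' t)) ` {p..b} \<subseteq> Om"
    using \<gamma>_in_Om a_less_p by auto
  moreover have "bounded ((\<lambda>t. (h t, h' t)) ` {p..b})"
    using a_less_p by (intro compact_imp_bounded compact_continuous_image continuous_on_Pair
        continuous_on_subset[OF h_cont] continuous_on_subset[OF h'_cont]) auto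
  ultimately obtain e where e: "e > 0"
    and tail_in_Om: "\<And>\<epsilon> t. \<bar>\<epsilon>\<bar> < e \<Longrightarrow> t \<in> {p..b} \<Longrightarrow> (\<gamma> t, \<gamma>' t) + \<epsilon> *\<^sub>R (h t, h' t) \<in> Om"
    using compact_image_perturbation_in_open[of "\<lambda>t. (\<gamma> t, \<gamma>' t)" "{p..b}" Om "\<lambda>t. (h t, h' t)"]
      open_Om by blast
  show thesis
  proof (rule that[OF e])
    fix \<epsilon> t assume \<epsilon>: "\<bar>\<epsilon>\<bar> < e" and t: "t \<in> {a<..b}"
    show "(\<gamma> t + \<epsilon> * h t, \<gamma>' t + \<epsilon> * h' t) \<in> Om"
    proof (cases "t \<le> p")
      case True
      then show ?thesis using h_vanishes h'_vanishes \<gamma>_in_Om t by simp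
    next
      case False
      then show ?thesis using tail_in_Om[OF \<epsilon>, of t] t by simp
    qed
  qed
qed

lemma variation_has_derivative:
  "t \<in> {a<..b} \<Longrightarrow>
     ((\<lambda>s. \<gamma> s + \<epsilon> * h s) has_real_derivative \<gamma>' t + \<epsilon> * h' t) (at t within {a..b})"
  using \<gamma>_has_derivative h_deriv[of t] by (auto intro!: derivative_eq_intros)

lemma curve_deriv_variation:
  assumes "t \<in> {a<..b}"
  shows "curve_deriv (\<lambda>s. \<gamma> s + \<epsilon> * h s) a b t = \<gamma>' t + \<epsilon> * h' t"
proof -
  have "((\<lambda>s. \<gamma> s + \<epsilon> * h s) has_vector_derivative \<gamma>' t + \<epsilon> * h' t) (at t within cbox a b)"
    using variation_has_derivative[OF assms]
    by (simp add: has_real_derivative_iff_has_vector_derivative cbox_interval)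
  from vector_derivative_within_cbox[OF a_less_b _ this] assms show ?thesis
    by (simp add: curve_deriv_def cbox_interval)
qed

lemma continuous_on_along_variation:
  assumes in_Om: "\<And>t. t \<in> {a<..b} \<Longrightarrow> (\<gamma> t + \<epsilon> * h t, \<gamma>' t + \<epsilon> * h' t) \<in> Om"
    and f: "continuous_on Om f" and S: "S \<subseteq> {a<..b}"
  shows "continuous_on S (\<lambda>t. f (\<gamma> t + \<epsilon> * h t, \<gamma>' t + \<epsilon> * h' t))"
proof -
  have "continuous_on S (\<lambda>t. (\<gamma> t + \<epsilon> * h t, \<gamma>' t + \<epsilon> * h' t))"
    using S by (intro continuous_intros continuous_on_subset[OF \<gamma>_cont] continuous_on_subset[OF \<gamma>'_cont]
        continuous_on_subset[OF h_cont] continuous_on_subset[OF h'_cont]) auto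
  moreover have "(\<lambda>t. (\<gamma> t + \<epsilon> * h t, \<gamma>' t + \<epsilon> * h' t)) ` S \<subseteq> Om" using in_Om S by auto
  ultimately show ?thesis by (rule continuous_on_compose2[OF f])
qed

lemma integral_variation_split:
  assumes in_Om: "\<And>t. t \<in> {a<..b} \<Longrightarrow> (\<gamma> t + \<epsilon> * h t, \<gamma>' t + \<epsilon> * h' t) \<in> Om"
    and s: "s \<in> {a<..p}"
  shows "integral {s..b} (\<lambda>t. L (\<gamma> t + \<epsilon> * h t, \<gamma>' t + \<epsilon> * h' t))
       = integral {s..b} (\<lambda>t. L (\<gamma> t, \<gamma>' t)) + (tail_action \<epsilon> - tail_action 0)"
proof -
  have combine: "integral {s..b} (\<lambda>t. L (\<gamma> t + \<delta> * h t, \<gamma>' t + \<delta> * h' t))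
      = integral {s..p} (\<lambda>t. L (\<gamma> t + \<delta> * h t, \<gamma>' t + \<delta> * h' t)) + tail_action \<delta>"
    if "\<And>t. t \<in> {a<..b} \<Longrightarrow> (\<gamma> t + \<delta> * h t, \<gamma>' t + \<delta> * h' t) \<in> Om" for \<delta>
  proof -
    have "(\<lambda>t. L (\<gamma> t + \<delta> * h t, \<gamma>' t + \<delta> * h' t)) integrable_on {s..b}"
      using s by (intro integrable_continuous_interval continuous_on_along_variation[OF that L_cont]) auto
    from Henstock_Kurzweil_Integration.integral_combine[of s p b, OF _ _ this] s p_less_b
    show ?thesis unfolding tail_action_def by simp
  qed
  have "integral {s..p} (\<lambda>t. L (\<gamma> t + \<epsilon> * h t, \<gamma>' t + \<epsilon> * h' t)) = integral {s..p} (\<lambda>t. L (\<gamma> t, \<gamma>' t))"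
    using s by (intro integral_cong) (simp add: h_vanishes h'_vanishes)
  then show ?thesis
    using combine[OF in_Om] combine[of 0] \<gamma>_in_Om by simp
qed

lemma variation_admissible:
  assumes in_Om: "\<And>t. t \<in> {a<..b} \<Longrightarrow> (\<gamma> t + \<epsilon> * h t, \<gamma>' t + \<epsilon> * h' t) \<in> Om"
  shows "(\<lambda>s. \<gamma> s + \<epsilon> * h s) \<in> admissible Om L a b \<alpha> \<beta>"
    and "action L a b (\<lambda>s. \<gamma> s + \<epsilon> * h s) = action L a b \<gamma> + (tail_action \<epsilon> - tail_action 0)"
proof -
  let ?\<eta> = "\<lambda>s. \<gamma> s + \<epsilon> * h s"
  have integrand: "\<And>t. t \<in> {a<..b} \<Longrightarrow>
      L (?\<eta> t, curve_deriv ?\<eta> a b t) = L (\<gamma> t + \<epsilon> * h t, \<gamma>' t + \<epsilon> * h' t)"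
    by (simp add: curve_deriv_variation)
  have integrable: "(\<lambda>t. L (?\<eta> t, curve_deriv ?\<eta> a b t)) integrable_on {s..b}" if "s \<in> {a<..b}" for s
  proof -
    have "continuous_on {s..b} (\<lambda>t. L (\<gamma> t + \<epsilon> * h t, \<gamma>' t + \<epsilon> * h' t))"
      using that by (intro continuous_on_along_variation[OF in_Om L_cont]) auto
    then show ?thesis
      using that by (intro integrable_continuous_interval) (auto elim!: continuous_on_eq simp: integrand)
  qed
  obtain l where l: "((\<lambda>s. integral {s..b} (\<lambda>t. L (\<gamma> t, \<gamma>' t))) \<longlongrightarrow> l) (at_right a)"
    using action_defined_\<gamma> by (auto simp: action_defined_def)
  have "((\<lambda>s. integral {s..b} (\<lambda>t. L (?\<eta> t, curve_deriv ?\<eta> a b t)))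
      \<longlongrightarrow> l + (tail_action \<epsilon> - tail_action 0)) (at_right a)"
  proof (rule Lim_transform_eventually)
    show "((\<lambda>s. integral {s..b} (\<lambda>t. L (\<gamma> t, \<gamma>' t)) + (tail_action \<epsilon> - tail_action 0))
        \<longlongrightarrow> l + (tail_action \<epsilon> - tail_action 0)) (at_right a)"
      by (intro tendsto_add l tendsto_const)
    have "integral {s..b} (\<lambda>t. L (?\<eta> t, curve_deriv ?\<eta> a b t))
        = integral {s..b} (\<lambda>t. L (\<gamma> t, \<gamma>' t)) + (tail_action \<epsilon> - tail_action 0)"
      if "s \<in> {a<..p}" for s
      using that p_less_b integral_variation_split[OF in_Om that]
      by (subst integral_cong[OF integrand]) auto
    then show "\<forall>\<^sub>F s in at_right a. integral {s..b} (\<lambda>t. L (\<gamma> t, \<gamma>' t)) + (tail_action \<epsilon> - tail_action 0)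
        = integral {s..b} (\<lambda>t. L (?\<eta> t, curve_deriv ?\<eta> a b t))"
      using eventually_at_right_real[OF a_less_p] by (auto elim!: eventually_mono)
  qed
  then have limit: "action L a b ?\<eta> = l + (tail_action \<epsilon> - tail_action 0)"
    and "action_defined L a b ?\<eta>"
    using integrable tendsto_Lim[OF trivial_limit_at_right_real]
    by (auto simp: action_def action_defined_def)
  moreover have "continuous_on {a<..b} (curve_deriv ?\<eta> a b)"
    by (rule continuous_on_eq[OF _ curve_deriv_variation[symmetric]])
      (auto intro!: continuous_intros \<gamma>'_cont continuous_on_subset[OF h'_cont])
  moreover have "?\<eta> differentiable (at t within {a..b})" if "t \<in> {a<..b}" for t
    using variation_has_derivative[OF that] real_differentiable_def by blast
  ultimately show "?\<eta> \<in> admissible Om L a b \<alpha> \<beta>"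
    using in_Om h_vanishes[of a] h_b \<gamma>_a \<gamma>_b a_less_p
    by (auto simp: admissible_def curve_deriv_variation intro!: continuous_intros \<gamma>_cont h_cont)
  show "action L a b ?\<eta> = action L a b \<gamma> + (tail_action \<epsilon> - tail_action 0)"
    using limit tendsto_Lim[OF trivial_limit_at_right_real l] by (simp add: action_def)
qed

lemma tail_action_has_derivative:
  "(tail_action has_real_derivative
      integral {p..b} (\<lambda>t. Lx (\<gamma> t, \<gamma>' t) * h t + Ly (\<gamma> t, \<gamma>' t) * h' t)) (at 0)"
proof -
  obtain e where e: "e > 0"
    and in_Om: "\<And>\<epsilon> t. \<bar>\<epsilon>\<bar> < e \<Longrightarrow> t \<in> {a<..b} \<Longrightarrow> (\<gamma> t + \<epsilon> * h t, \<gamma>' t + \<epsilon> * h' t) \<in> Om"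
    using small_variations_in_Om by blast
  define U where "U = {-e<..<e}"
  define P where "P z = (\<gamma> (snd z) + fst z * h (snd z), \<gamma>' (snd z) + fst z * h' (snd z))"
    for z :: "real \<times> real"
  have P_cont: "continuous_on (U \<times> {p..b}) P"
    unfolding P_def
    by (intro continuous_intros continuous_on_compose2[OF \<gamma>_cont] continuous_on_compose2[OF \<gamma>'_cont]
        continuous_on_compose2[OF h_cont] continuous_on_compose2[OF h'_cont]) (use a_less_p in auto)
  have P_in_Om: "P ` (U \<times> {p..b}) \<subseteq> Om"
    using in_Om a_less_p by (auto simp: P_def U_def)
  have partial_cont: "continuous_on (U \<times> cbox p b) (\<lambda>(\<epsilon>, t). Lx (P (\<epsilon>, t)) * h t + Ly (P (\<epsilon>, t)) * h' t)"
  proof -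
    have "(\<lambda>(\<epsilon>, t). Lx (P (\<epsilon>, t)) * h t + Ly (P (\<epsilon>, t)) * h' t)
        = (\<lambda>z. Lx (P z) * h (snd z) + Ly (P z) * h' (snd z))"
      by auto
    then show ?thesis unfolding cbox_interval
      by (simp only:) (intro continuous_intros continuous_on_compose2[OF Lx_cont P_cont P_in_Om]
          continuous_on_compose2[OF Ly_cont P_cont P_in_Om]
          continuous_on_compose2[OF h_cont] continuous_on_compose2[OF h'_cont], use a_less_p in auto)
  qed
  have partial_deriv: "((\<lambda>\<epsilon>. L (\<gamma> t + \<epsilon> * h t, \<gamma>' t + \<epsilon> * h' t)) has_field_derivative
      Lx (P (\<epsilon>, t)) * h t + Ly (P (\<epsilon>, t)) * h' t) (at \<epsilon> within U)"
    if "\<epsilon> \<in> U" "t \<in> cbox p b" for \<epsilon> t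
  proof -
    have in_Om: "P (\<epsilon>, t) \<in> Om" using P_in_Om that by (auto simp: cbox_interval)
    have inner: "((\<lambda>\<epsilon>. P (\<epsilon>, t)) has_derivative (\<lambda>d. (d * h t, d * h' t))) (at \<epsilon> within U)"
      unfolding P_def by (auto intro!: derivative_eq_intros)
    have "((\<lambda>\<epsilon>. L (P (\<epsilon>, t))) has_derivative
        (\<lambda>d. Lx (P (\<epsilon>, t)) * (d * h t) + Ly (P (\<epsilon>, t)) * (d * h' t))) (at \<epsilon> within U)"
      using has_derivative_compose[OF inner L_deriv[OF in_Om]] by simp
    then show ?thesis
      unfolding has_field_derivative_def P_def fst_conv snd_conv
      by (rule has_derivative_eq_rhs) (auto simp: fun_eq_iff algebra_simps)
  qed
  have integrable: "(\<lambda>t. L (\<gamma> t + \<epsilon> * h t, \<gamma>' t + \<epsilon> * h' t)) integrable_on cbox p b"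
    if "\<epsilon> \<in> U" for \<epsilon>
    unfolding cbox_interval using that a_less_p
    by (intro integrable_continuous_interval continuous_on_along_variation[OF in_Om L_cont])
      (auto simp: U_def)
  have "((\<lambda>\<epsilon>. integral (cbox p b) (\<lambda>t. L (\<gamma> t + \<epsilon> * h t, \<gamma>' t + \<epsilon> * h' t))) has_field_derivative
      integral (cbox p b) (\<lambda>t. Lx (P (0, t)) * h t + Ly (P (0, t)) * h' t)) (at 0 within U)"
    by (rule leibniz_rule_field_derivative[OF partial_deriv integrable partial_cont])
      (auto simp: U_def e)
  moreover have "at 0 within U = at 0" using e by (intro at_within_open) (auto simp: U_def)
  ultimately show ?thesis
    by (simp add: tail_action_def[abs_def] P_def cbox_interval)
qed

lemma first_variation_zero:
  assumes "extremal_on (action L a b) (admissible Om L a b \<alpha> \<beta>) \<gamma>"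
  shows "integral {p..b} (\<lambda>t. Lx (\<gamma> t, \<gamma>' t) * h t + Ly (\<gamma> t, \<gamma>' t) * h' t) = 0"
proof -
  obtain e where e: "e > 0"
    and in_Om: "\<And>\<epsilon> t. \<bar>\<epsilon>\<bar> < e \<Longrightarrow> t \<in> {a<..b} \<Longrightarrow> (\<gamma> t + \<epsilon> * h t, \<gamma>' t + \<epsilon> * h' t) \<in> Om"
    using small_variations_in_Om by blast
  have variation: "(\<lambda>s. \<gamma> s + \<epsilon> * h s) \<in> admissible Om L a b \<alpha> \<beta> \<and>
      action L a b (\<lambda>s. \<gamma> s + \<epsilon> * h s) - action L a b \<gamma> = tail_action \<epsilon> - tail_action 0"
    if "\<bar>0 - \<epsilon>\<bar> < e" for \<epsilon>
    using variation_admissible[of \<epsilon>] in_Om that by auto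
  note derivative = tail_action_has_derivative
  from assms show ?thesis
    unfolding extremal_on_def
  proof
    assume "\<forall>\<eta>\<in>admissible Om L a b \<alpha> \<beta>. action L a b \<gamma> \<le> action L a b \<eta>"
    then have "\<forall>\<epsilon>. \<bar>0 - \<epsilon>\<bar> < e \<longrightarrow> tail_action 0 \<le> tail_action \<epsilon>"
      using variation by fastforce
    then show ?thesis by (rule DERIV_local_min[OF derivative e])
  next
    assume "\<forall>\<eta>\<in>admissible Om L a b \<alpha> \<beta>. action L a b \<eta> \<le> action L a b \<gamma>"
    then have "\<forall>\<epsilon>. \<bar>0 - \<epsilon>\<bar> < e \<longrightarrow> tail_action \<epsilon> \<le> tail_action 0"
      using variation by fastforce
    then show ?thesis by (rule DERIV_local_max[OF derivative e])
  qed
qed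

end

context lagrangian_curve
begin

lemma primitive_Lx_has_derivative:
  assumes "a < p" "x \<in> {p..b}"
  shows "((\<lambda>x. integral {p..x} (\<lambda>r. Lx (\<gamma> r, \<gamma>' r))) has_real_derivative Lx (\<gamma> x, \<gamma>' x))
           (at x within {p..b})"
  using assms by (intro integral_has_real_derivative continuous_on_along_\<gamma>[OF Lx_cont]) auto

lemma continuous_on_primitive_Lx:
  "a < p \<Longrightarrow> continuous_on {p..b} (\<lambda>x. integral {p..x} (\<lambda>r. Lx (\<gamma> r, \<gamma>' r)))"
  using primitive_Lx_has_derivative
  by (meson DERIV_continuous continuous_on_eq_continuous_within)

lemma orthogonal_to_primitive_difference:
  assumes extremal: "extremal_on (action L a b) (admissible Om L a b \<alpha> \<beta>) \<gamma>"
    and p: "a < p" "p < b"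
    and \<phi>: "continuous_on {p..b} \<phi>" "\<phi> p = 0" "integral {p..b} \<phi> = 0"
  shows "integral {p..b}
           (\<lambda>s. (Ly (\<gamma> s, \<gamma>' s) - integral {p..s} (\<lambda>r. Lx (\<gamma> r, \<gamma>' r))) * \<phi> s) = 0"
proof -
  define h' where "h' s = \<phi> (max s p)" for s
  define h where "h x = integral {a..x} h'" for x
  have h'_cont: "continuous_on {a..b} h'"
    unfolding h'_def using p by (intro continuous_on_compose2[OF \<phi>(1)] continuous_intros) auto
  have h_deriv: "(h has_real_derivative h' x) (at x within {a..b})" if "x \<in> {a..b}" for x
    unfolding h_def by (rule integral_has_real_derivative[OF h'_cont that])
  have h'_vanishes: "h' s = 0" if "s \<le> p" for s
    using that \<phi>(2) by (simp add: h'_def max_def)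
  have h'_eq: "h' s = \<phi> s" if "s \<in> {p..b}" for s
    using that by (simp add: h'_def)
  have h_vanishes: "h x = 0" if "x \<in> {a..p}" for x
  proof -
    have "h x = integral {a..x} (\<lambda>_. 0::real)"
      unfolding h_def using that by (intro integral_cong) (auto intro: h'_vanishes)
    then show ?thesis by simp
  qed
  have h_b: "h b = 0"
  proof -
    have "integral {a..p} h' + integral {p..b} h' = integral {a..b} h'"
      using p by (intro Henstock_Kurzweil_Integration.integral_combine
          integrable_continuous_interval h'_cont) auto
    moreover have "integral {p..b} h' = integral {p..b} \<phi>" by (rule integral_cong) (simp add: h'_eq)
    ultimately show ?thesis using h_vanishes[of p] p \<phi>(3) by (simp add: h_def)
  qed
  interpret lagrangian_variation Om L Lx Ly a b \<alpha> \<beta> \<gamma> h h' p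
    using p h_deriv h'_cont h_vanishes h'_vanishes h_b by unfold_locales auto
  define A where "A x = integral {p..x} (\<lambda>r. Lx (\<gamma> r, \<gamma>' r))" for x
  have A_deriv: "(A has_real_derivative Lx (\<gamma> x, \<gamma>' x)) (at x within {p..b})" if "x \<in> {p..b}" for x
    unfolding A_def using primitive_Lx_has_derivative[OF p(1) that] .
  have A_cont: "continuous_on {p..b} A"
    unfolding A_def by (rule continuous_on_primitive_Lx[OF p(1)])
  have Lx_cont_p: "continuous_on {p..b} (\<lambda>r. Lx (\<gamma> r, \<gamma>' r))"
    using p by (intro continuous_on_along_\<gamma>[OF Lx_cont]) auto
  have Ly_cont_p: "continuous_on {p..b} (\<lambda>r. Ly (\<gamma> r, \<gamma>' r))"
    using p by (intro continuous_on_along_\<gamma>[OF Ly_cont]) auto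
  have h_cont_p: "continuous_on {p..b} h"
    using p by (intro continuous_on_subset[OF h_cont]) auto
  \<comment> \<open>Integration by parts; the boundary terms vanish because \<open>h p = h b = 0\<close>.\<close>
  have "((\<lambda>s. Lx (\<gamma> s, \<gamma>' s) * h s + A s * \<phi> s) has_integral A b * h b - A p * h p) {p..b}"
  proof (rule fundamental_theorem_of_calculus)
    fix x assume x: "x \<in> {p..b}"
    have "(h has_real_derivative \<phi> x) (at x within {p..b})"
      using h_deriv[of x] x p h'_eq[OF x] by (auto intro: DERIV_subset)
    with A_deriv[OF x] show "((\<lambda>s. A s * h s) has_vector_derivative
        Lx (\<gamma> x, \<gamma>' x) * h x + A x * \<phi> x) (at x within {p..b})"
      unfolding has_real_derivative_iff_has_vector_derivative[symmetric]
      by (auto intro!: derivative_eq_intros)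
  qed (use p in simp)
  then have by_parts: "integral {p..b} (\<lambda>s. Lx (\<gamma> s, \<gamma>' s) * h s + A s * \<phi> s) = 0"
    using h_b h_vanishes[of p] p by (simp add: integral_unique)
  have "integral {p..b} (\<lambda>s. Lx (\<gamma> s, \<gamma>' s) * h s + Ly (\<gamma> s, \<gamma>' s) * \<phi> s)
      = integral {p..b} (\<lambda>s. Lx (\<gamma> s, \<gamma>' s) * h s + Ly (\<gamma> s, \<gamma>' s) * h' s)"
    by (rule integral_cong) (simp add: h'_eq)
  also have "\<dots> = 0" by (rule first_variation_zero[OF extremal])
  finally have first_variation: "integral {p..b} (\<lambda>s. Lx (\<gamma> s, \<gamma>' s) * h s + Ly (\<gamma> s, \<gamma>' s) * \<phi> s) = 0" .
  have "integral {p..b} (\<lambda>s. (Ly (\<gamma> s, \<gamma>' s) - A s) * \<phi> s)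
      = integral {p..b} (\<lambda>s. (Lx (\<gamma> s, \<gamma>' s) * h s + Ly (\<gamma> s, \<gamma>' s) * \<phi> s)
                           - (Lx (\<gamma> s, \<gamma>' s) * h s + A s * \<phi> s))"
    by (rule integral_cong) (simp add: algebra_simps)
  also have "\<dots> = 0"
  proof (subst integral_diff)
    show "(\<lambda>s. Lx (\<gamma> s, \<gamma>' s) * h s + Ly (\<gamma> s, \<gamma>' s) * \<phi> s) integrable_on {p..b}"
      by (intro integrable_continuous_interval continuous_intros Lx_cont_p Ly_cont_p h_cont_p \<phi>(1))
    show "(\<lambda>s. Lx (\<gamma> s, \<gamma>' s) * h s + A s * \<phi> s) integrable_on {p..b}"
      by (intro integrable_continuous_interval continuous_intros Lx_cont_p A_cont h_cont_p \<phi>(1))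
  qed (use first_variation by_parts in simp)
  finally show ?thesis by (simp add: A_def)
qed

lemma Euler_Lagrange:
  assumes extremal: "extremal_on (action L a b) (admissible Om L a b \<alpha> \<beta>) \<gamma>"
    and t: "t \<in> {a<..b}"
  shows "((\<lambda>s. Ly (\<gamma> s, \<gamma>' s)) has_real_derivative Lx (\<gamma> t, \<gamma>' t)) (at t within {a..b})"
proof -
  define p where "p = (a + t) / 2"
  have p: "a < p" "p < t" "p < b" using t by (auto simp: p_def)
  define A where "A x = integral {p..x} (\<lambda>r. Lx (\<gamma> r, \<gamma>' r))" for x
  have A_deriv: "(A has_real_derivative Lx (\<gamma> t, \<gamma>' t)) (at t within {p..b})"
    unfolding A_def using primitive_Lx_has_derivative[OF p(1)] p t by simp
  have "continuous_on {p..b} (\<lambda>s. Ly (\<gamma> s, \<gamma>' s) - A s)"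
    unfolding A_def using p
    by (intro continuous_on_diff continuous_on_along_\<gamma>[OF Ly_cont] continuous_on_primitive_Lx) auto
  then obtain c where c: "\<And>s. s \<in> {p<..b} \<Longrightarrow> Ly (\<gamma> s, \<gamma>' s) - A s = c"
    using du_Bois_Reymond[OF p(3)] orthogonal_to_primitive_difference[OF extremal p(1,3)]
    unfolding A_def by blast
  have "((\<lambda>s. c + A s) has_real_derivative Lx (\<gamma> t, \<gamma>' t)) (at t within {p..b})"
    using A_deriv by (auto intro!: derivative_eq_intros)
  then have "((\<lambda>s. Ly (\<gamma> s, \<gamma>' s)) has_real_derivative Lx (\<gamma> t, \<gamma>' t)) (at t within {p..b})"
  proof (rule has_field_derivative_transform_within)
    show "0 < t - p" "t \<in> {p..b}" using p t by auto
    show "c + A s = Ly (\<gamma> s, \<gamma>' s)" if "s \<in> {p..b}" "dist s t < t - p" for s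
    proof -
      have "p < s" using that by (auto simp: dist_real_def)
      then show ?thesis using c[of s] that by auto
    qed
  qed
  moreover have "at t within {p..b} = at t within {a..b}"
    using p t by (intro at_within_nhd[of _ "{p<..}"]) auto
  ultimately show ?thesis by simp
qed

end

theorem theorem2:
  fixes c :: real and d :: ereal and I J :: "real set" and Om :: "(real \<times> real) set"
    and L :: "real \<times> real \<Rightarrow> real" and Lx Ly :: "real \<times> real \<Rightarrow> real"
    and a b \<alpha> \<beta> :: real and \<gamma> :: "real \<Rightarrow> real"
  assumes I_def: "I = {x. ereal c < ereal x \<and> ereal x < d}"
    and J_open: "open J" and J_interval: "is_interval J"
    and O_def: "Om = I \<times> J"
    and L_deriv: "\<And>p. p \<in> Om \<Longrightarrow>
         (L has_derivative (\<lambda>(h, k). Lx p * h + Ly p * k)) (at p)"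
    and Lx_cont: "continuous_on Om Lx" and Ly_cont: "continuous_on Om Ly"
    and ab: "a < b"
    and \<gamma>X: "\<gamma> \<in> admissible Om L a b \<alpha> \<beta>"
    and extremum: "(\<forall>\<eta>\<in>admissible Om L a b \<alpha> \<beta>. action L a b \<gamma> \<le> action L a b \<eta>) \<or>
                   (\<forall>\<eta>\<in>admissible Om L a b \<alpha> \<beta>. action L a b \<eta> \<le> action L a b \<gamma>)"
  shows "\<forall>t\<in>{a<..b}.
    ((\<lambda>s. Ly (\<gamma> s, curve_deriv \<gamma> a b s)) has_real_derivative
       Lx (\<gamma> t, curve_deriv \<gamma> a b t)) (at t within {a..b})"
proof -
  have "open Om"
    unfolding O_def I_def by (intro open_Times open_ereal_bounded_real_interval J_open)
  then interpret lagrangian_curve Om L Lx Ly a b \<alpha> \<beta> \<gamma>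
    using L_deriv Lx_cont Ly_cont ab \<gamma>X by unfold_locales
  show ?thesis
    using Euler_Lagrange extremum unfolding extremal_on_def by blast
qed

end
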